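(* Let $d=d(n)$ satisfy $12 \le d \le e^{\sqrt[3]{\log n}}$ and let $m = \frac{\log n \,\log\log\log n}{\log d\, \log\log n}$. If $p=p(n) \ge (8d+12)\frac{\log n}{n}$, then for all sufficiently large $n$, the probability that $G(n,p)$ contains a vertex set $S$ with $2 \le |S| \le \frac{n}{dm}$ and $|N(S)| < d|S|$ is at most $e^{-\frac32 pn}$.
   Context: $G(n,p)$ is the Erdős–Rényi random graph on a vertex set $V$ of size $n$ in which each pair of vertices is an edge independently with probability $p$; $\log$ is the natural logarithm. For $S\subseteq V$, the external neighbourhood $N(S)$ is the set of vertices $v \in V\setminus S$ adjacent to some vertex of $S$. *)

theory Defs
  imports Complex_Main
begin

text \<open>Vertex set V = {0..<n}. A graph is a set of edges, each edge a 2-element subset of V.\<close>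

definition all_pairs :: "nat \<Rightarrow> nat set set" where
  "all_pairs n = {e. \<exists>u v. u < n \<and> v < n \<and> u \<noteq> v \<and> e = {u, v}}"

text \<open>Probability that the Erdos-Renyi random graph G(n,p) has property P:
  each of the possible edges is present independently with probability p.\<close>

definition gnp_prob :: "nat \<Rightarrow> real \<Rightarrow> (nat set set \<Rightarrow> bool) \<Rightarrow> real" where
  "gnp_prob n p P =
     (\<Sum>E \<in> Pow (all_pairs n).
        if P E then p ^ card E * (1 - p) ^ (card (all_pairs n) - card E) else 0)"

definition ext_nbhd :: "nat \<Rightarrow> nat set set \<Rightarrow> nat set \<Rightarrow> nat set" where
  "ext_nbhd n E S = {v \<in> {..<n} - S. \<exists>u \<in> S. {u, v} \<in> E}"

end

theory Submission
  imports Defs "HOL-Real_Asymp.Real_Asymp"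
begin

(* If |N(S)| < d|S|, then for T = N(S) no edge joins S to V - (S \<union> T). A union bound over S
   and over all T with |T| < d|S| bounds the probability by the sum of (1 - p)^(|S| |V - S - T|).
   For large n we have m \<ge> 18, so |S| \<le> n/(dm) forces |S| + |T| \<le> n/16 and each term is at
   most e^(-15pn|S|/16), while there are at most (n + 1)^(d|S|) \<le> n^(3d|S|/2) sets T.
   Since pn \<ge> (8d + 12) log n and |S| \<ge> 2, the contribution of S is at most
   e^(-3pn/2) n^(-|S|) / 3, and summing n^(-|S|) over all S gives (1 + 1/n)^n \<le> 3. *)

lemma sum_Pow_power_card:
  fixes x y :: "'a::comm_semiring_1"
  assumes "finite A"
  shows "(\<Sum>X\<in>Pow A. x ^ card X * y ^ (card A - card X)) = (x + y) ^ card A"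
proof -
  have "(x + y) ^ card A = (\<Sum>X\<in>Pow A. x ^ card X * y ^ card (A - X))"
    using prod_add[OF assms, of "\<lambda>_. x" "\<lambda>_. y"] by simp
  also have "\<dots> = (\<Sum>X\<in>Pow A. x ^ card X * y ^ (card A - card X))"
    using assms by (intro sum.cong) (auto simp: card_Diff_subset finite_subset)
  finally show ?thesis by simp
qed

lemma finite_all_pairs: "finite (all_pairs n)"
proof -
  have "all_pairs n \<subseteq> Pow {..<n}" unfolding all_pairs_def by auto
  then show ?thesis by (rule finite_subset) simp
qed

lemma gnp_prob_mono:
  assumes "0 \<le> p" "p \<le> 1" "\<And>E. E \<subseteq> all_pairs n \<Longrightarrow> P E \<Longrightarrow> Q E"
  shows "gnp_prob n p P \<le> gnp_prob n p Q"
  unfolding gnp_prob_def by (rule sum_mono) (use assms in auto)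

lemma gnp_prob_Bex_le_sum:
  assumes "0 \<le> p" "p \<le> 1" "finite I"
  shows "gnp_prob n p (\<lambda>E. \<exists>i\<in>I. Q i E) \<le> (\<Sum>i\<in>I. gnp_prob n p (Q i))"
proof -
  let ?w = "\<lambda>E. p ^ card E * (1 - p) ^ (card (all_pairs n) - card E)"
  have "(if \<exists>i\<in>I. Q i E then ?w E else 0) \<le> (\<Sum>i\<in>I. if Q i E then ?w E else 0)" for E
  proof -
    have w_nonneg: "0 \<le> ?w E" using assms by simp
    show ?thesis
    proof (cases "\<exists>i\<in>I. Q i E")
      case True
      then obtain i where "i \<in> I" "Q i E" by blast
      then show ?thesis
        using member_le_sum[of i I "\<lambda>i. if Q i E then ?w E else 0"] w_nonneg assms(3) by auto
    qed (simp add: w_nonneg sum_nonneg)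
  qed
  then have "gnp_prob n p (\<lambda>E. \<exists>i\<in>I. Q i E)
      \<le> (\<Sum>E\<in>Pow (all_pairs n). \<Sum>i\<in>I. if Q i E then ?w E else 0)"
    unfolding gnp_prob_def by (rule sum_mono)
  also have "\<dots> = (\<Sum>i\<in>I. gnp_prob n p (Q i))"
    unfolding gnp_prob_def by (rule sum.swap)
  finally show ?thesis .
qed

lemma gnp_prob_disjoint:
  assumes "F \<subseteq> all_pairs n"
  shows "gnp_prob n p (\<lambda>E. E \<inter> F = {}) = (1 - p) ^ card F"
proof -
  let ?A = "all_pairs n"
  have fin: "finite ?A" "finite F" using assms finite_all_pairs finite_subset by auto
  have card_A: "card ?A = card (?A - F) + card F"
    using assms fin by (simp add: card_Diff_subset card_mono)
  have "gnp_prob n p (\<lambda>E. E \<inter> F = {})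
      = (\<Sum>E\<in>Pow (?A - F). p ^ card E * (1 - p) ^ (card ?A - card E))"
    unfolding gnp_prob_def by (rule sum.mono_neutral_cong_right) (use fin in auto)
  also have "\<dots> = (\<Sum>E\<in>Pow (?A - F).
      (1 - p) ^ card F * (p ^ card E * (1 - p) ^ (card (?A - F) - card E)))"
  proof (rule sum.cong)
    fix E assume "E \<in> Pow (?A - F)"
    then have "card ?A - card E = card F + (card (?A - F) - card E)"
      using card_A card_mono[of "?A - F" E] fin by auto
    then show "p ^ card E * (1 - p) ^ (card ?A - card E)
        = (1 - p) ^ card F * (p ^ card E * (1 - p) ^ (card (?A - F) - card E))"
      by (simp add: power_add)
  qed simp
  also have "\<dots> = (1 - p) ^ card F"
    using fin by (simp add: sum_distrib_left[symmetric] sum_Pow_power_card)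
  finally show ?thesis .
qed

definition edges_between :: "'a set \<Rightarrow> 'a set \<Rightarrow> 'a set set" where
  "edges_between S W = {{u, v} | u v. u \<in> S \<and> v \<in> W}"

lemma card_edges_between:
  assumes "S \<inter> W = {}"
  shows "card (edges_between S W) = card S * card W"
proof -
  have "edges_between S W = (\<lambda>(u, v). {u, v}) ` (S \<times> W)"
    unfolding edges_between_def by auto
  moreover have "inj_on (\<lambda>(u, v). {u, v}) (S \<times> W)"
    using assms by (auto simp: inj_on_def doubleton_eq_iff)
  ultimately show ?thesis by (simp add: card_image card_cartesian_product)
qed

lemma edges_between_subset_all_pairs:
  "S \<subseteq> {..<n} \<Longrightarrow> W \<subseteq> {..<n} \<Longrightarrow> S \<inter> W = {} \<Longrightarrow> edges_between S W \<subseteq> all_pairs n"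
  unfolding edges_between_def all_pairs_def by blast

lemma disjoint_edges_between_non_neighbours:
  "E \<inter> edges_between S ({..<n} - S - ext_nbhd n E S) = {}"
  unfolding edges_between_def ext_nbhd_def by blast

lemma gnp_prob_card_ext_nbhd_less:
  assumes "0 \<le> p" "p \<le> 1" "S \<subseteq> {..<n}"
  shows "gnp_prob n p (\<lambda>E. real (card (ext_nbhd n E S)) < x)
    \<le> (\<Sum>T | T \<subseteq> {..<n} - S \<and> real (card T) < x. (1 - p) ^ (card S * card ({..<n} - S - T)))"
proof -
  let ?Ts = "{T. T \<subseteq> {..<n} - S \<and> real (card T) < x}"
  have "finite ?Ts" by (rule finite_subset[of _ "Pow {..<n}"]) auto
  have "gnp_prob n p (\<lambda>E. real (card (ext_nbhd n E S)) < x)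
      \<le> gnp_prob n p (\<lambda>E. \<exists>T\<in>?Ts. E \<inter> edges_between S ({..<n} - S - T) = {})"
  proof (rule gnp_prob_mono[OF assms(1,2)])
    fix E assume "real (card (ext_nbhd n E S)) < x"
    moreover have "ext_nbhd n E S \<subseteq> {..<n} - S" by (auto simp: ext_nbhd_def)
    ultimately show "\<exists>T\<in>?Ts. E \<inter> edges_between S ({..<n} - S - T) = {}"
      using disjoint_edges_between_non_neighbours by blast
  qed
  also have "\<dots> \<le> (\<Sum>T\<in>?Ts. gnp_prob n p (\<lambda>E. E \<inter> edges_between S ({..<n} - S - T) = {}))"
    using assms(1,2) \<open>finite ?Ts\<close> by (rule gnp_prob_Bex_le_sum)
  also have "\<dots> = (\<Sum>T\<in>?Ts. (1 - p) ^ (card S * card ({..<n} - S - T)))"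
  proof (rule sum.cong)
    fix T assume "T \<in> ?Ts"
    then have "edges_between S ({..<n} - S - T) \<subseteq> all_pairs n"
      using assms(3) by (intro edges_between_subset_all_pairs) auto
    moreover have "S \<inter> ({..<n} - S - T) = {}" by blast
    ultimately show "gnp_prob n p (\<lambda>E. E \<inter> edges_between S ({..<n} - S - T) = {})
        = (1 - p) ^ (card S * card ({..<n} - S - T))"
      by (simp add: gnp_prob_disjoint card_edges_between)
  qed simp
  finally show ?thesis .
qed

lemma card_subsets_card_le:
  assumes "finite A"
  shows "card {T. T \<subseteq> A \<and> card T \<le> k} \<le> (card A + 1) ^ k"
proof (induction k)
  case 0
  have "{T. T \<subseteq> A \<and> card T \<le> 0} = {{}}"
    using assms by (auto dest: finite_subset)
  then show ?case by simp
next
  case (Suc k)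
  let ?U = "{T. T \<subseteq> A \<and> card T \<le> k}"
  let ?ins = "\<lambda>(x, T). insert x T"
  have "finite ?U" using assms by simp
  have "{T. T \<subseteq> A \<and> card T \<le> Suc k} \<subseteq> insert {} (?ins ` (A \<times> ?U))"
  proof
    fix T assume T: "T \<in> {T. T \<subseteq> A \<and> card T \<le> Suc k}"
    show "T \<in> insert {} (?ins ` (A \<times> ?U))"
    proof (cases "T = {}")
      case False
      then obtain x where "x \<in> T" by blast
      moreover have "finite T" using T assms finite_subset by auto
      ultimately have "T = insert x (T - {x})" "card (T - {x}) \<le> k"
        using T by auto
      then show ?thesis using T \<open>x \<in> T\<close> by (auto intro!: image_eqI[where x="(x, T - {x})"])
    qed simp
  qed
  then have "card {T. T \<subseteq> A \<and> card T \<le> Suc k} \<le> card (insert {} (?ins ` (A \<times> ?U)))"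
    using assms \<open>finite ?U\<close> by (intro card_mono) auto
  also have "\<dots> \<le> Suc (card (?ins ` (A \<times> ?U)))"
    using assms \<open>finite ?U\<close> by (simp add: card_insert_if)
  also have "\<dots> \<le> Suc (card A * card ?U)"
    using card_image_le[of "A \<times> ?U" ?ins] assms \<open>finite ?U\<close> by (simp add: card_cartesian_product)
  also have "\<dots> \<le> Suc (card A * (card A + 1) ^ k)"
    using Suc.IH by simp
  also have "\<dots> \<le> (card A + 1) ^ Suc k"
    using one_le_power[of "card A + 1" k] by simp
  finally show ?case .
qed

lemma card_subsets_card_less_le_exp:
  assumes "finite A" "card A \<le> n" "0 \<le> x"
  shows "real (card {T. T \<subseteq> A \<and> real (card T) < x}) \<le> exp (x * ln (real n + 1))"
proof -
  define k where "k = nat \<lfloor>x\<rfloor>"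
  have "{T. T \<subseteq> A \<and> real (card T) < x} \<subseteq> {T. T \<subseteq> A \<and> card T \<le> k}"
    unfolding k_def by (auto intro: le_nat_floor)
  then have "card {T. T \<subseteq> A \<and> real (card T) < x} \<le> card {T. T \<subseteq> A \<and> card T \<le> k}"
    using assms(1) by (intro card_mono) auto
  also have "\<dots> \<le> (card A + 1) ^ k"
    using assms(1) by (rule card_subsets_card_le)
  also have "\<dots> \<le> (n + 1) ^ k"
    using assms(2) by (intro power_mono) auto
  finally have "real (card {T. T \<subseteq> A \<and> real (card T) < x}) \<le> real ((n + 1) ^ k)"
    by (rule of_nat_mono)
  also have "\<dots> = exp (real k * ln (real n + 1))"
    by (simp add: exp_of_nat_mult add.commute)
  also have "\<dots> \<le> exp (x * ln (real n + 1))"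
    using assms(3) by (simp add: k_def mult_right_mono)
  finally show ?thesis .
qed

lemma card_lessThan_Diff_Diff:
  assumes "S \<subseteq> {..<n}" "T \<subseteq> {..<n} - S"
  shows "card ({..<n} - S - T) = n - card S - card T"
proof -
  have "finite S" "finite T" "S \<inter> T = {}"
    using assms by (auto intro: finite_subset[of _ "{..<n}"])
  then have "card (S \<union> T) = card S + card T" by (rule card_Un_disjoint)
  moreover have "card ({..<n} - (S \<union> T)) = n - card (S \<union> T)"
    using \<open>finite S\<close> \<open>finite T\<close> assms by (subst card_Diff_subset) auto
  moreover have "{..<n} - S - T = {..<n} - (S \<union> T)" by auto
  ultimately show ?thesis by simp
qed

lemma one_minus_power_le_exp:
  fixes p :: real
  assumes "p \<le> 1"
  shows "(1 - p) ^ k \<le> exp (- p * real k)"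
proof -
  have "(1 - p) ^ k \<le> exp (- p) ^ k"
    using assms exp_ge_add_one_self[of "- p"] by (intro power_mono) auto
  then show ?thesis by (simp add: exp_of_nat_mult[symmetric] mult.commute)
qed

lemma ln_add_one_le:
  assumes "4 \<le> n"
  shows "ln (real n + 1) \<le> 3 / 2 * ln (real n)"
proof -
  have "(n + 1) ^ 2 \<le> (2 * n) ^ 2"
    using assms by (intro power_mono) auto
  also have "\<dots> = 4 * (n * n)" by (simp add: power2_eq_square)
  also have "\<dots> \<le> n * (n * n)" using assms by (intro mult_right_mono) auto
  finally have "(n + 1) ^ 2 \<le> n ^ 3"
    by (simp add: power3_eq_cube)
  then have "(real n + 1) ^ 2 \<le> real n ^ 3"
    using of_nat_le_iff[of "(n + 1) ^ 2" "n ^ 3", where 'a = real] by (simp add: add.commute)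
  then have "ln ((real n + 1) ^ 2) \<le> ln (real n ^ 3)"
    using assms by simp
  then show ?thesis
    using assms by (simp add: ln_realpow)
qed

lemma expansion_exponent_le:
  fixes d s L P :: real
  assumes "0 \<le> d" "2 \<le> s" "ln 3 \<le> L" "(8 * d + 12) * L \<le> P"
  shows "3 / 2 * (d * s * L) - 15 / 16 * (P * s) \<le> - 3 / 2 * P - s * L - ln 3"
proof -
  have "0 \<le> L" using assms(3) ln_ge_zero[of 3] by linarith
  then have "0 \<le> P" using assms(1,4) by (smt (verit) mult_nonneg_nonneg)
  then have "2 * P \<le> P * s" using assms(2) by (simp add: mult_left_mono mult.commute)
  moreover have "8 * (d * s * L) + 12 * (s * L) \<le> P * s"
    using mult_right_mono[OF assms(4), of s] assms(2) by (simp add: algebra_simps)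
  moreover have "2 * L \<le> s * L" using assms(2) \<open>0 \<le> L\<close> by (simp add: mult_right_mono)
  ultimately show ?thesis using assms(3) \<open>0 \<le> L\<close> by linarith
qed

lemma one_minus_power_edges_to_rest_le:
  fixes p :: real
  assumes "0 \<le> p" "p \<le> 1" "S \<subseteq> {..<n}" "T \<subseteq> {..<n} - S"
    and "real (card S) + real (card T) \<le> real n / 16"
  shows "(1 - p) ^ (card S * card ({..<n} - S - T)) \<le> exp (- 15 / 16 * (p * real n * real (card S)))"
proof -
  have "card S + card T \<le> n"
    using assms(5) of_nat_le_iff[of "card S + card T" n, where 'a = real] by simp
  then have "real (card ({..<n} - S - T)) = real n - real (card S) - real (card T)"
    using card_lessThan_Diff_Diff[OF assms(3,4)] by (simp add: of_nat_diff)
  then have "15 / 16 * real n \<le> real (card ({..<n} - S - T))"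
    using assms(5) by linarith
  then have "real (card S) * (15 / 16 * real n) \<le> real (card S) * real (card ({..<n} - S - T))"
    by (intro mult_left_mono) auto
  then have "p * (real (card S) * (15 / 16 * real n))
      \<le> p * (real (card S) * real (card ({..<n} - S - T)))"
    using assms(1) by (rule mult_left_mono)
  then have "exp (- p * real (card S * card ({..<n} - S - T)))
      \<le> exp (- 15 / 16 * (p * real n * real (card S)))"
    by (simp add: algebra_simps)
  with one_minus_power_le_exp[OF assms(2)] show ?thesis by (rule order.trans)
qed

lemma sum_candidate_nbhds_le:
  fixes d p :: real
  assumes "12 \<le> d" "0 \<le> p" "p \<le> 1" "(8 * d + 12) * ln (real n) / real n \<le> p" "4 \<le> n"
    and "S \<subseteq> {..<n}" "2 \<le> card S" "18 * d * real (card S) \<le> real n"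
  shows "(\<Sum>T | T \<subseteq> {..<n} - S \<and> real (card T) < d * real (card S).
            (1 - p) ^ (card S * card ({..<n} - S - T)))
         \<le> exp (- (3 / 2) * p * real n) * (1 / real n) ^ card S / 3"
proof -
  define s L P where "s = real (card S)" and "L = ln (real n)" and "P = p * real n"
  let ?Ts = "{T. T \<subseteq> {..<n} - S \<and> real (card T) < d * s}"
  have n_pos: "0 < real n" using assms(5) by simp
  have "12 * s \<le> d * s" using assms(1) by (intro mult_right_mono) (auto simp: s_def)
  moreover have "18 * (d * s) \<le> real n" using assms(8) by (simp add: s_def mult.assoc)
  ultimately have "s + real (card T) \<le> real n / 16" if "T \<in> ?Ts" for T
    using that by auto
  then have "(1 - p) ^ (card S * card ({..<n} - S - T)) \<le> exp (- 15 / 16 * (P * s))"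
    if "T \<in> ?Ts" for T
    using that assms(2,3,6) unfolding P_def s_def
    by (intro one_minus_power_edges_to_rest_le) auto
  then have "(\<Sum>T\<in>?Ts. (1 - p) ^ (card S * card ({..<n} - S - T)))
      \<le> real (card ?Ts) * exp (- 15 / 16 * (P * s))"
    by (rule sum_bounded_above)
  also have "\<dots> \<le> exp (d * s * ln (real n + 1)) * exp (- 15 / 16 * (P * s))"
    using assms(1) card_subsets_card_less_le_exp[of "{..<n} - S" n "d * s"]
      card_mono[of "{..<n}" "{..<n} - S"]
    by (intro mult_right_mono) (auto simp: s_def)
  also have "\<dots> = exp (d * s * ln (real n + 1) - 15 / 16 * (P * s))"
    by (simp flip: exp_add)
  also have "\<dots> \<le> exp (3 / 2 * (d * s * L) - 15 / 16 * (P * s))"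
    using mult_left_mono[OF ln_add_one_le[OF assms(5)], of "d * s"] assms(1)
    by (simp add: L_def s_def algebra_simps)
  also have "\<dots> \<le> exp (- 3 / 2 * P - s * L - ln 3)"
  proof (subst exp_le_cancel_iff, rule expansion_exponent_le)
    show "2 \<le> s" using assms(7) by (simp add: s_def)
    show "ln 3 \<le> L" using assms(5) by (simp add: L_def)
    show "(8 * d + 12) * L \<le> P" using assms(4) n_pos by (simp add: L_def P_def pos_divide_le_eq)
  qed (use assms(1) in simp)
  also have "\<dots> = exp (- (3 / 2) * p * real n) * (1 / real n) ^ card S / 3"
    using n_pos by (simp add: s_def L_def P_def exp_diff exp_minus exp_of_nat_mult power_one_over)
  finally show ?thesis by (simp add: s_def)
qed

lemma sum_Pow_lessThan_inverse_power_le: "(\<Sum>S\<in>Pow {..<n}. (1 / real n) ^ card S) \<le> 3"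
proof (cases "n = 0")
  case False
  have "(\<Sum>S\<in>Pow {..<n}. (1 / real n) ^ card S) = (1 + 1 / real n) ^ n"
    using sum_Pow_power_card[of "{..<n}" "1 / real n" 1] by (simp add: add.commute)
  also have "\<dots> \<le> exp 1"
    using False exp_ge_one_plus_x_over_n_power_n[of n 1] by simp
  also have "\<dots> \<le> 3"
    using exp_le by simp
  finally show ?thesis .
qed simp

lemma gnp_prob_small_set_small_ext_nbhd_le:
  fixes d p m :: real
  assumes "12 \<le> d" "0 \<le> p" "p \<le> 1" "(8 * d + 12) * ln (real n) / real n \<le> p"
    and "18 \<le> m" "4 \<le> n"
  shows "gnp_prob n p (\<lambda>E. \<exists>S \<subseteq> {..<n}. 2 \<le> card S \<and> real (card S) \<le> real n / (d * m)
           \<and> real (card (ext_nbhd n E S)) < d * real (card S))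
     \<le> exp (- (3 / 2) * p * real n)"
proof -
  let ?SS = "{S. S \<subseteq> {..<n} \<and> 2 \<le> card S \<and> real (card S) \<le> real n / (d * m)}"
  let ?q = "exp (- (3 / 2) * p * real n)"
  have "finite ?SS" by (rule finite_subset[of _ "Pow {..<n}"]) auto
  have "gnp_prob n p (\<lambda>E. \<exists>S \<subseteq> {..<n}. 2 \<le> card S \<and> real (card S) \<le> real n / (d * m)
           \<and> real (card (ext_nbhd n E S)) < d * real (card S))
      \<le> gnp_prob n p (\<lambda>E. \<exists>S\<in>?SS. real (card (ext_nbhd n E S)) < d * real (card S))"
    using assms(2,3) by (rule gnp_prob_mono) auto
  also have "\<dots> \<le> (\<Sum>S\<in>?SS. gnp_prob n p (\<lambda>E. real (card (ext_nbhd n E S)) < d * real (card S)))"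
    using assms(2,3) \<open>finite ?SS\<close> by (rule gnp_prob_Bex_le_sum)
  also have "\<dots> \<le> (\<Sum>S\<in>?SS. ?q * (1 / real n) ^ card S / 3)"
  proof (rule sum_mono)
    fix S assume S: "S \<in> ?SS"
    have "18 * d * real (card S) \<le> m * d * real (card S)"
      using assms(1,5) by (intro mult_right_mono) auto
    also have "\<dots> \<le> real n"
      using S assms(1,5) by (simp add: field_simps)
    finally have "18 * d * real (card S) \<le> real n" .
    then have "(\<Sum>T | T \<subseteq> {..<n} - S \<and> real (card T) < d * real (card S).
        (1 - p) ^ (card S * card ({..<n} - S - T))) \<le> ?q * (1 / real n) ^ card S / 3"
      using S by (intro sum_candidate_nbhds_le[OF assms(1-4,6)]) auto
    moreover have "gnp_prob n p (\<lambda>E. real (card (ext_nbhd n E S)) < d * real (card S))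
        \<le> (\<Sum>T | T \<subseteq> {..<n} - S \<and> real (card T) < d * real (card S).
          (1 - p) ^ (card S * card ({..<n} - S - T)))"
      using S by (intro gnp_prob_card_ext_nbhd_less[OF assms(2,3)]) auto
    ultimately show "gnp_prob n p (\<lambda>E. real (card (ext_nbhd n E S)) < d * real (card S))
        \<le> ?q * (1 / real n) ^ card S / 3"
      by (rule order.trans[rotated])
  qed
  also have "\<dots> \<le> (\<Sum>S\<in>Pow {..<n}. ?q * (1 / real n) ^ card S / 3)"
    by (rule sum_mono2) auto
  also have "\<dots> = ?q / 3 * (\<Sum>S\<in>Pow {..<n}. (1 / real n) ^ card S)"
    by (simp add: sum_distrib_left)
  also have "\<dots> \<le> ?q / 3 * 3"
    by (intro mult_left_mono sum_Pow_lessThan_inverse_power_le) simp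
  also have "\<dots> = ?q" by simp
  finally show ?thesis .
qed

lemma eventually_log_ratio_ge_18:
  fixes d :: "nat \<Rightarrow> real"
  assumes "\<forall>\<^sub>F n in sequentially. 12 \<le> d n \<and> d n \<le> exp (root 3 (ln (real n)))"
  shows "\<forall>\<^sub>F n in sequentially.
    18 \<le> ln (real n) * ln (ln (ln (real n))) / (ln (d n) * ln (ln (real n)))"
proof -
  have "\<forall>\<^sub>F n in sequentially.
      18 \<le> ln (real n) * ln (ln (ln (real n))) / (root 3 (ln (real n)) * ln (ln (real n)))"
    by real_asymp
  moreover have "\<forall>\<^sub>F n in sequentially. 0 < ln (ln (ln (real n)))" by real_asymp
  moreover have "\<forall>\<^sub>F n in sequentially. 0 < ln (ln (real n))" by real_asymp
  moreover have "\<forall>\<^sub>F n in sequentially. 0 < ln (real n)" by real_asymp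
  moreover note assms
  ultimately show ?thesis
  proof eventually_elim
    case (elim n)
    then have "0 < ln (d n)" "ln (d n) \<le> root 3 (ln (real n))"
      using ln_mono[of "d n" "exp (root 3 (ln (real n)))"] by auto
    then have "ln (real n) * ln (ln (ln (real n))) / (root 3 (ln (real n)) * ln (ln (real n)))
        \<le> ln (real n) * ln (ln (ln (real n))) / (ln (d n) * ln (ln (real n)))"
      using elim by (intro divide_left_mono mult_right_mono mult_pos_pos) auto
    then show ?case using elim by linarith
  qed
qed

theorem lemma17:
  fixes d p :: "nat \<Rightarrow> real"
  assumes "\<forall>\<^sub>F n in sequentially. 12 \<le> d n \<and> d n \<le> exp (root 3 (ln (real n)))"
    and "\<forall>\<^sub>F n in sequentially. 0 \<le> p n \<and> p n \<le> 1"
    and "\<forall>\<^sub>F n in sequentially. p n \<ge> (8 * d n + 12) * ln (real n) / real n"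
  shows "\<forall>\<^sub>F n in sequentially.
    (let m = ln (real n) * ln (ln (ln (real n))) / (ln (d n) * ln (ln (real n))) in
     gnp_prob n (p n)
       (\<lambda>E. \<exists>S \<subseteq> {..<n}. 2 \<le> card S \<and> real (card S) \<le> real n / (d n * m)
              \<and> real (card (ext_nbhd n E S)) < d n * real (card S))
     \<le> exp (- (3 / 2) * p n * real n))"
  using assms eventually_log_ratio_ge_18[OF assms(1)] eventually_ge_at_top[of 4]
proof eventually_elim
  case (elim n)
  then show ?case
    unfolding Let_def by (intro gnp_prob_small_set_small_ext_nbhd_le) auto
qed

end
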